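(* Let $n\ge3$ and let $G=K_{1,n-1}$ be the uniform coloured star graph on vertices $1,\dots,n$ with centre $1$ (edges $\{1,j\}$, $j=2,\dots,n$), with associated linear space $\mathcal L$. Let $E$ be its edge set and $E^c$ the set of pairs $\{i,j\}$ of distinct vertices with $i,j\ge2$. Then $r=3$, $s=4$, and the vector space of linear forms in $I(\mathcal L^{-1})$ is spanned by $x_{22}-x_{ii}$ ($i=3,\dots,n$); $x_{12}-x_{ij}$ ($\{i,j\}\in E$); $x_{23}-x_{ij}$ ($\{i,j\}\in E^c$); and $x_{11}-(n-2)\,x_{n-1,n}-x_{nn}$.
   Context: For a simple graph $G$ on $V=\{1,\dots,n\}$, its uniform coloured version has one vertex colour and one edge colour, and its associated linear space is $\mathcal L=\{\lambda_1I_n+\lambda_2A_2:\lambda_1,\lambda_2\in\mathbb C\}\subseteq\mathbb S^n$, where $A_2$ is the 0/1 adjacency matrix of $G$. The reciprocal variety $\mathcal L^{-1}$ is the Zariski closure of $\{M^{-1}:M\in\mathcal L\text{ invertible}\}$, with vanishing ideal $I(\mathcal L^{-1})\subseteq\mathbb C[x_{ij}:1\le i\le j\le n]$, using $x_{ji}=x_{ij}$. Here $r$ is the number of distinct eigenvalues of $A_2$ and $s$ is the number of orbits of the automorphism group of $G$ acting on unordered pairs $\{i,j\}$ of (not necessarily distinct) vertices via $\{i,j\}\mapsto\{\sigma(i),\sigma(j)\}$. *)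

theory Defs
  imports "Jordan_Normal_Form.Matrix" "Jordan_Normal_Form.Char_Poly" "HOL-Library.Poly_Mapping"
begin

text \<open>Polynomials in the variables x_(i,j), represented by pairs (i,j) of naturals,
  with complex coefficients: finitely supported maps from monomials to coefficients.\<close>
type_synonym monom = "(nat \<times> nat) \<Rightarrow>\<^sub>0 nat"
type_synonym cpoly = "monom \<Rightarrow>\<^sub>0 complex"

definition peval :: "cpoly \<Rightarrow> (nat \<times> nat \<Rightarrow> complex) \<Rightarrow> complex" where
  "peval f y = (\<Sum>m\<in>Poly_Mapping.keys f. Poly_Mapping.lookup f m * (\<Prod>v\<in>Poly_Mapping.keys m. y v ^ Poly_Mapping.lookup m v))"

definition sym_idx :: "nat \<Rightarrow> (nat \<times> nat) set" where
  "sym_idx n = {(i,j). 1 \<le> i \<and> i \<le> j \<and> j \<le> n}"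

definition polys_in :: "nat \<Rightarrow> cpoly set" where
  "polys_in n = {f. \<forall>m\<in>Poly_Mapping.keys f. Poly_Mapping.keys m \<subseteq> sym_idx n}"

definition zariski_closure :: "nat \<Rightarrow> (nat \<times> nat \<Rightarrow> complex) set \<Rightarrow> (nat \<times> nat \<Rightarrow> complex) set" where
  "zariski_closure n S = {y. \<forall>f\<in>polys_in n. (\<forall>x\<in>S. peval f x = 0) \<longrightarrow> peval f y = 0}"

definition vanishing_ideal :: "nat \<Rightarrow> (nat \<times> nat \<Rightarrow> complex) set \<Rightarrow> cpoly set" where
  "vanishing_ideal n V = {f\<in>polys_in n. \<forall>y\<in>V. peval f y = 0}"

text \<open>Coordinates x_ij of an n x n matrix (1-based indices; matrix entries are 0-based).\<close>
definition coords :: "complex mat \<Rightarrow> nat \<times> nat \<Rightarrow> complex" where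
  "coords N = (\<lambda>(i,j). N $$ (i - 1, j - 1))"

definition adj_mat :: "nat \<Rightarrow> (nat \<Rightarrow> nat \<Rightarrow> bool) \<Rightarrow> complex mat" where
  "adj_mat n E = mat n n (\<lambda>(i,j). if E (i+1) (j+1) then 1 else 0)"

definition lin_space :: "nat \<Rightarrow> (nat \<Rightarrow> nat \<Rightarrow> bool) \<Rightarrow> complex mat set" where
  "lin_space n E = {l1 \<cdot>\<^sub>m 1\<^sub>m n + l2 \<cdot>\<^sub>m adj_mat n E | l1 l2. True}"

definition reciprocal_variety :: "nat \<Rightarrow> (nat \<Rightarrow> nat \<Rightarrow> bool) \<Rightarrow> (nat \<times> nat \<Rightarrow> complex) set" where
  "reciprocal_variety n E = zariski_closure n
     (coords ` {N \<in> carrier_mat n n. \<exists>M\<in>lin_space n E. M * N = 1\<^sub>m n \<and> N * M = 1\<^sub>m n})"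

definition num_eigenvalues :: "nat \<Rightarrow> (nat \<Rightarrow> nat \<Rightarrow> bool) \<Rightarrow> nat" where
  "num_eigenvalues n E = card {k. eigenvalue (adj_mat n E) k}"

definition graph_aut :: "nat \<Rightarrow> (nat \<Rightarrow> nat \<Rightarrow> bool) \<Rightarrow> (nat \<Rightarrow> nat) set" where
  "graph_aut n E = {\<sigma>. bij_betw \<sigma> {1..n} {1..n} \<and>
      (\<forall>i\<in>{1..n}. \<forall>j\<in>{1..n}. E (\<sigma> i) (\<sigma> j) \<longleftrightarrow> E i j)}"

definition upairs :: "nat \<Rightarrow> nat set set" where
  "upairs n = {{i,j} | i j. i \<in> {1..n} \<and> j \<in> {1..n}}"

definition num_pair_orbits :: "nat \<Rightarrow> (nat \<Rightarrow> nat \<Rightarrow> bool) \<Rightarrow> nat" where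
  "num_pair_orbits n E = card ((\<lambda>P. {\<sigma> ` P | \<sigma>. \<sigma> \<in> graph_aut n E}) ` upairs n)"

definition is_linear_form :: "cpoly \<Rightarrow> bool" where
  "is_linear_form f = (\<forall>m\<in>Poly_Mapping.keys f. (\<Sum>v\<in>Poly_Mapping.keys m. Poly_Mapping.lookup m v) = 1)"

definition var :: "nat \<Rightarrow> nat \<Rightarrow> cpoly" where
  "var i j = Poly_Mapping.single (Poly_Mapping.single (min i j, max i j) 1) 1"

definition cscale :: "complex \<Rightarrow> cpoly \<Rightarrow> cpoly" where
  "cscale c f = Poly_Mapping.map (\<lambda>a. c * a) f"

definition cspan :: "cpoly set \<Rightarrow> cpoly set" where
  "cspan G = {f. \<exists>F c. F \<subseteq> G \<and> finite F \<and> f = (\<Sum>g\<in>F. cscale (c g) g)}"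

definition star_graph :: "nat \<Rightarrow> nat \<Rightarrow> nat \<Rightarrow> bool" where
  "star_graph n i j = (i \<in> {1..n} \<and> j \<in> {1..n} \<and> i \<noteq> j \<and> (i = 1 \<or> j = 1))"

end

theory Submission
  imports Defs
begin

text \<open>Every inverse of \<open>\<lambda>\<^sub>1 I + \<lambda>\<^sub>2 A\<close> is constant on the orbits of the automorphism group
  on index pairs: it has an entry \<open>p\<close> at the centre, \<open>r\<close> on the rest of the centre's row and
  column, \<open>q\<close> on the remaining diagonal and \<open>t\<close> elsewhere, and these satisfy
  \<open>p - q = (n - 2) t\<close>. Modulo the differences of variables in a common orbit, which are among
  the generators, a linear form reduces to a combination of \<open>x\<^sub>1\<^sub>1, x\<^sub>2\<^sub>2, x\<^sub>1\<^sub>2, x\<^sub>2\<^sub>3\<close>.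
  Three explicit inverses span the hyperplane \<open>p - q = (n - 2) t\<close>, so a relation among these four
  variables is a multiple of \<open>x\<^sub>1\<^sub>1 - x\<^sub>2\<^sub>2 - (n - 2) x\<^sub>2\<^sub>3\<close>, which is congruent to the last
  generator. The eigenvalues \<open>0, \<plusminus>\<surd>(n - 1)\<close> and the four pair orbits (a pair either contains
  the centre or not, and has one or two elements) are elementary.\<close>

lemma lookup_cscale [simp]: "Poly_Mapping.lookup (cscale c f) m = c * Poly_Mapping.lookup f m"
  unfolding cscale_def by (simp add: Poly_Mapping.map.rep_eq when_def)

lemma cscale_diff: "cscale c (f - g) = cscale c f - cscale c g"
  by (rule poly_mapping_eqI) (simp add: lookup_minus algebra_simps)

lemma cscale_add_left: "cscale (a + b) f = cscale a f + cscale b f"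
  by (rule poly_mapping_eqI) (simp add: lookup_add algebra_simps)

lemma cscale_cscale: "cscale a (cscale b f) = cscale (a * b) f"
  by (rule poly_mapping_eqI) simp

lemma cscale_one [simp]: "cscale 1 f = f"
  by (rule poly_mapping_eqI) simp

lemma cscale_zero_left [simp]: "cscale 0 f = 0"
  by (rule poly_mapping_eqI) simp

lemma cscale_minus_one: "cscale (-1) f = - f"
  by (rule poly_mapping_eqI) simp

lemma cscale_sum: "cscale c (sum g A) = (\<Sum>x\<in>A. cscale c (g x))"
  by (rule poly_mapping_eqI) (simp add: lookup_sum sum_distrib_left)

lemma keys_cscale_subset: "Poly_Mapping.keys (cscale c f) \<subseteq> Poly_Mapping.keys f"
  by (auto simp: in_keys_iff)

lemma keys_diff_subset:
  "Poly_Mapping.keys f \<subseteq> K \<Longrightarrow> Poly_Mapping.keys g \<subseteq> K \<Longrightarrow> Poly_Mapping.keys (f - g) \<subseteq> K"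
  using keys_diff[of f g] by blast

lemma keys_cscale_subsetI: "Poly_Mapping.keys f \<subseteq> K \<Longrightarrow> Poly_Mapping.keys (cscale c f) \<subseteq> K"
  using keys_cscale_subset[of c f] by blast

lemma peval_eq_sum_superset:
  assumes "finite K" "Poly_Mapping.keys f \<subseteq> K"
  shows "peval f y = (\<Sum>m\<in>K. Poly_Mapping.lookup f m *
    (\<Prod>v\<in>Poly_Mapping.keys m. y v ^ Poly_Mapping.lookup m v))"
  unfolding peval_def by (rule sum.mono_neutral_left) (use assms in \<open>auto simp: in_keys_iff\<close>)

lemma peval_add: "peval (f + g) y = peval f y + peval g y"
proof -
  let ?K = "Poly_Mapping.keys f \<union> Poly_Mapping.keys g"
  have "finite ?K" "Poly_Mapping.keys (f + g) \<subseteq> ?K"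
    using keys_add[of f g] by auto
  then show ?thesis
    by (simp add: peval_eq_sum_superset[of ?K] lookup_add algebra_simps sum.distrib)
qed

lemma peval_cscale: "peval (cscale c f) y = c * peval f y"
  using keys_cscale_subset[of c f]
  by (simp add: peval_eq_sum_superset[of "Poly_Mapping.keys f"] sum_distrib_left algebra_simps)

lemma peval_diff: "peval (f - g) y = peval f y - peval g y"
  using peval_add[of f "- g" y] peval_cscale[of "-1" g y] by (simp add: cscale_minus_one)

lemma peval_zero [simp]: "peval 0 y = 0"
  by (simp add: peval_def)

definition pvar :: "nat \<times> nat \<Rightarrow> cpoly" where
  "pvar v = Poly_Mapping.single (Poly_Mapping.single v 1) 1"

lemma var_eq_pvar: "var i j = pvar (min i j, max i j)"
  by (simp add: var_def pvar_def)

lemma peval_pvar [simp]: "peval (pvar v) y = y v"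
  by (simp add: peval_def pvar_def)

lemma keys_pvar [simp]: "Poly_Mapping.keys (pvar v) = {Poly_Mapping.single v 1}"
  by (simp add: pvar_def)

lemma single_one_eq_iff: "Poly_Mapping.single v (1::nat) = Poly_Mapping.single w 1 \<longleftrightarrow> v = w"
  by (metis lookup_single_eq lookup_single_not_eq zero_neq_one)

lemma lookup_pvar: "Poly_Mapping.lookup (pvar v) m = (if m = Poly_Mapping.single v 1 then 1 else 0)"
  by (simp add: pvar_def lookup_single when_def)

lemma cspan_base: "g \<in> G \<Longrightarrow> g \<in> cspan G"
  unfolding cspan_def by (intro CollectI exI[of _ "{g}"] exI[of _ "\<lambda>_. 1"]) simp

lemma cspan_zero: "0 \<in> cspan G"
  unfolding cspan_def by (intro CollectI exI[of _ "{}"]) simp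

lemma cspan_cscale:
  assumes "f \<in> cspan G"
  shows "cscale a f \<in> cspan G"
proof -
  obtain F c where F: "F \<subseteq> G" "finite F" "f = (\<Sum>g\<in>F. cscale (c g) g)"
    using assms by (auto simp: cspan_def)
  then have "cscale a f = (\<Sum>g\<in>F. cscale (a * c g) g)"
    by (simp add: cscale_sum cscale_cscale)
  with F(1,2) show ?thesis
    unfolding cspan_def by (intro CollectI exI[of _ F] exI[of _ "\<lambda>g. a * c g"]) simp
qed

lemma cspan_add:
  assumes "f \<in> cspan G" "h \<in> cspan G"
  shows "f + h \<in> cspan G"
proof -
  obtain F1 c1 where F1: "F1 \<subseteq> G" "finite F1" "f = (\<Sum>g\<in>F1. cscale (c1 g) g)"
    using assms(1) by (auto simp: cspan_def)
  obtain F2 c2 where F2: "F2 \<subseteq> G" "finite F2" "h = (\<Sum>g\<in>F2. cscale (c2 g) g)"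
    using assms(2) by (auto simp: cspan_def)
  define c1' where "c1' g = (if g \<in> F1 then c1 g else 0)" for g
  define c2' where "c2' g = (if g \<in> F2 then c2 g else 0)" for g
  have "(\<Sum>g\<in>F1 \<union> F2. cscale (c1' g) g) = f"
    unfolding F1(3) c1'_def by (rule sum.mono_neutral_cong_right) (use F1 F2 in auto)
  moreover have "(\<Sum>g\<in>F1 \<union> F2. cscale (c2' g) g) = h"
    unfolding F2(3) c2'_def by (rule sum.mono_neutral_cong_right) (use F1 F2 in auto)
  ultimately have "f + h = (\<Sum>g\<in>F1 \<union> F2. cscale (c1' g + c2' g) g)"
    by (simp add: cscale_add_left sum.distrib)
  with F1 F2 show ?thesis
    unfolding cspan_def by (intro CollectI exI[of _ "F1 \<union> F2"] exI[of _ "\<lambda>g. c1' g + c2' g"]) simp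
qed

lemma cspan_diff: "f \<in> cspan G \<Longrightarrow> h \<in> cspan G \<Longrightarrow> f - h \<in> cspan G"
  using cspan_add[of f G "cscale (-1) h"] cspan_cscale[of h G "-1"] by (simp add: cscale_minus_one)

lemma cspan_induct [consumes 1, case_names zero add cscale base]:
  assumes "f \<in> cspan G"
    and "P 0" "\<And>f h. P f \<Longrightarrow> P h \<Longrightarrow> P (f + h)" "\<And>a f. P f \<Longrightarrow> P (cscale a f)"
    and "\<And>g. g \<in> G \<Longrightarrow> P g"
  shows "P f"
proof -
  obtain F c where F: "F \<subseteq> G" "finite F" "f = (\<Sum>g\<in>F. cscale (c g) g)"
    using assms(1) by (auto simp: cspan_def)
  from F(2,1) have "P (\<Sum>g\<in>F. cscale (c g) g)"
    by (induction F rule: finite_induct) (simp_all add: assms(2-5))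
  with F show ?thesis by simp
qed

definition linear_monoms :: "nat \<Rightarrow> monom set" where
  "linear_monoms n = (\<lambda>v. Poly_Mapping.single v 1) ` sym_idx n"

lemma finite_sym_idx: "finite (sym_idx n)"
  by (rule finite_subset[of _ "{1..n} \<times> {1..n}"]) (auto simp: sym_idx_def)

lemma sym_idxI: "1 \<le> i \<Longrightarrow> i \<le> j \<Longrightarrow> j \<le> n \<Longrightarrow> (i, j) \<in> sym_idx n"
  by (simp add: sym_idx_def)

lemma keys_pvar_subset: "v \<in> sym_idx n \<Longrightarrow> Poly_Mapping.keys (pvar v) \<subseteq> linear_monoms n"
  by (simp add: linear_monoms_def)

lemma degree_one_monom_eq_single:
  assumes "(\<Sum>v\<in>Poly_Mapping.keys m. Poly_Mapping.lookup m v) = (1::nat)"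
  obtains v where "m = Poly_Mapping.single v 1"
proof -
  obtain v where v: "v \<in> Poly_Mapping.keys m"
    using assms by fastforce
  have "Poly_Mapping.lookup m v + (\<Sum>w\<in>Poly_Mapping.keys m - {v}. Poly_Mapping.lookup m w) = 1"
    using assms v by (simp add: sum.remove)
  moreover have "Poly_Mapping.lookup m v \<noteq> 0"
    using v by (simp add: in_keys_iff)
  ultimately have one: "Poly_Mapping.lookup m v = 1"
    and "(\<Sum>w\<in>Poly_Mapping.keys m - {v}. Poly_Mapping.lookup m w) = 0"
    by linarith+
  then have "\<forall>w\<in>Poly_Mapping.keys m - {v}. Poly_Mapping.lookup m w = 0"
    by simp
  then have "Poly_Mapping.lookup m w = 0" if "w \<noteq> v" for w
    using that by (metis DiffI in_keys_iff singletonD)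
  with one have "m = Poly_Mapping.single v 1"
    by (intro poly_mapping_eqI) (auto simp: lookup_single when_def)
  then show thesis by (rule that)
qed

lemma linear_form_iff_keys:
  "f \<in> polys_in n \<and> is_linear_form f \<longleftrightarrow> Poly_Mapping.keys f \<subseteq> linear_monoms n"
proof
  assume f: "f \<in> polys_in n \<and> is_linear_form f"
  show "Poly_Mapping.keys f \<subseteq> linear_monoms n"
  proof
    fix m assume m: "m \<in> Poly_Mapping.keys f"
    with f have "(\<Sum>v\<in>Poly_Mapping.keys m. Poly_Mapping.lookup m v) = 1"
      by (simp add: is_linear_form_def)
    then obtain v where v: "m = Poly_Mapping.single v 1"
      by (rule degree_one_monom_eq_single)
    with f m have "v \<in> sym_idx n"
      by (auto simp: polys_in_def)
    with v show "m \<in> linear_monoms n"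
      by (simp add: linear_monoms_def)
  qed
next
  assume "Poly_Mapping.keys f \<subseteq> linear_monoms n"
  then have single: "\<exists>v\<in>sym_idx n. m = Poly_Mapping.single v 1" if "m \<in> Poly_Mapping.keys f" for m
    using that unfolding linear_monoms_def by blast
  show "f \<in> polys_in n \<and> is_linear_form f"
    unfolding polys_in_def is_linear_form_def
  proof (intro conjI CollectI ballI)
    fix m assume "m \<in> Poly_Mapping.keys f"
    with single obtain v where "v \<in> sym_idx n" "m = Poly_Mapping.single v 1" by blast
    then show "Poly_Mapping.keys m \<subseteq> sym_idx n"
      and "(\<Sum>v\<in>Poly_Mapping.keys m. Poly_Mapping.lookup m v) = 1"
      by simp_all
  qed
qed

lemma linear_form_expansion:
  assumes "Poly_Mapping.keys f \<subseteq> linear_monoms n"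
  shows "f = (\<Sum>v\<in>sym_idx n. cscale (Poly_Mapping.lookup f (Poly_Mapping.single v 1)) (pvar v))"
proof (rule poly_mapping_eqI)
  fix m
  show "Poly_Mapping.lookup f m = Poly_Mapping.lookup
      (\<Sum>v\<in>sym_idx n. cscale (Poly_Mapping.lookup f (Poly_Mapping.single v 1)) (pvar v)) m"
  proof (cases "\<exists>w\<in>sym_idx n. m = Poly_Mapping.single w 1")
    case True
    then obtain w where w: "w \<in> sym_idx n" "m = Poly_Mapping.single w 1" by blast
    then have "Poly_Mapping.lookup (pvar v) m = (if v = w then 1 else 0)" for v
      unfolding lookup_pvar w(2) single_one_eq_iff by auto
    then have "(\<Sum>v\<in>sym_idx n. Poly_Mapping.lookup f (Poly_Mapping.single v 1) * Poly_Mapping.lookup (pvar v) m)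
        = (\<Sum>v\<in>sym_idx n. if v = w then Poly_Mapping.lookup f m else 0)"
      using w(2) by (intro sum.cong) auto
    with w finite_sym_idx show ?thesis by (simp add: lookup_sum)
  next
    case False
    then have "m \<notin> Poly_Mapping.keys f"
      using assms by (auto simp: linear_monoms_def)
    with False show ?thesis
      by (simp add: lookup_sum in_keys_iff lookup_pvar)
  qed
qed

section \<open>Inverses in the linear space of the star\<close>

abbreviation star_adj :: "nat \<Rightarrow> complex mat" where
  "star_adj n \<equiv> adj_mat n (star_graph n)"

lemma star_adj_carrier [simp]:
  "star_adj n \<in> carrier_mat n n" "dim_row (star_adj n) = n" "dim_col (star_adj n) = n"
  by (auto simp: adj_mat_def)

lemma star_adj_index:
  "i < n \<Longrightarrow> k < n \<Longrightarrow> star_adj n $$ (i, k) = (if i \<noteq> k \<and> (i = 0 \<or> k = 0) then 1 else 0)"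
  by (auto simp: adj_mat_def star_graph_def)

lemma sum_star_adj_row:
  assumes "i < n"
  shows "(\<Sum>k<n. star_adj n $$ (i, k) * g k) = (if i = 0 then (\<Sum>k\<in>{1..<n}. g k) else g 0)"
proof -
  have "(\<Sum>k<n. star_adj n $$ (i, k) * g k) =
      (\<Sum>k<n. if i = 0 then (if k \<in> {1..<n} then g k else 0) else (if k = 0 then g k else 0))"
    using assms by (intro sum.cong) (auto simp: star_adj_index)
  also have "\<dots> = (if i = 0 then (\<Sum>k\<in>{1..<n}. g k) else g 0)"
    using assms by (auto simp: sum.If_cases intro!: sum.cong)
  finally show ?thesis .
qed

lemma sum_star_adj_col:
  assumes "j < n"
  shows "(\<Sum>k<n. g k * star_adj n $$ (k, j)) = (if j = 0 then (\<Sum>k\<in>{1..<n}. g k) else g 0)"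
proof -
  have "(\<Sum>k<n. g k * star_adj n $$ (k, j)) = (\<Sum>k<n. star_adj n $$ (j, k) * g k)"
    using assms by (intro sum.cong) (auto simp: star_adj_index)
  with sum_star_adj_row[OF assms] show ?thesis by simp
qed

definition pencil :: "nat \<Rightarrow> complex \<Rightarrow> complex \<Rightarrow> complex mat" where
  "pencil n a b = a \<cdot>\<^sub>m 1\<^sub>m n + b \<cdot>\<^sub>m star_adj n"

lemma lin_space_star: "lin_space n (star_graph n) = {pencil n a b | a b. True}"
  by (auto simp: lin_space_def pencil_def)

lemma pencil_carrier [simp]: "dim_row (pencil n a b) = n" "dim_col (pencil n a b) = n"
  by (auto simp: pencil_def)

lemma pencil_mult_index:
  assumes "N \<in> carrier_mat n n" "i < n" "j < n"
  shows "(pencil n a b * N) $$ (i, j) =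
    a * N $$ (i, j) + b * (if i = 0 then (\<Sum>k\<in>{1..<n}. N $$ (k, j)) else N $$ (0, j))"
proof -
  have "(pencil n a b * N) $$ (i, j) =
      (\<Sum>k<n. a * (if i = k then N $$ (k, j) else 0) + b * (star_adj n $$ (i, k) * N $$ (k, j)))"
    using assms by (auto simp: scalar_prod_def pencil_def atLeast0LessThan algebra_simps intro!: sum.cong)
  also have "\<dots> = a * N $$ (i, j) + b * (\<Sum>k<n. star_adj n $$ (i, k) * N $$ (k, j))"
    using assms by (simp add: sum.distrib sum_distrib_left[symmetric])
  finally show ?thesis
    using sum_star_adj_row[OF assms(2)] by simp
qed

lemma mult_pencil_index:
  assumes "N \<in> carrier_mat n n" "i < n" "j < n"
  shows "(N * pencil n a b) $$ (i, j) =
    a * N $$ (i, j) + b * (if j = 0 then (\<Sum>k\<in>{1..<n}. N $$ (i, k)) else N $$ (i, 0))"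
proof -
  have "(N * pencil n a b) $$ (i, j) =
      (\<Sum>k<n. a * (if k = j then N $$ (i, k) else 0) + b * (N $$ (i, k) * star_adj n $$ (k, j)))"
    using assms by (auto simp: scalar_prod_def pencil_def atLeast0LessThan algebra_simps intro!: sum.cong)
  also have "\<dots> = a * N $$ (i, j) + b * (\<Sum>k<n. N $$ (i, k) * star_adj n $$ (k, j))"
    using assms by (simp add: sum.distrib sum_distrib_left[symmetric])
  finally show ?thesis
    using sum_star_adj_col[OF assms(3)] by simp
qed

text \<open>The matrices constant on the orbits of the automorphism group on index pairs; matrix
  indices are 0-based, so the centre of the star is row and column 0.\<close>

definition star_pattern :: "nat \<Rightarrow> complex \<Rightarrow> complex \<Rightarrow> complex \<Rightarrow> complex \<Rightarrow> complex mat" where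
  "star_pattern n p q r t = mat n n (\<lambda>(i, j).
     if i = 0 \<and> j = 0 then p else if i = 0 \<or> j = 0 then r else if i = j then q else t)"

lemma star_pattern_carrier [simp]: "star_pattern n p q r t \<in> carrier_mat n n"
  by (simp add: star_pattern_def)

lemma star_pattern_index:
  "i < n \<Longrightarrow> j < n \<Longrightarrow> star_pattern n p q r t $$ (i, j) =
    (if i = 0 \<and> j = 0 then p else if i = 0 \<or> j = 0 then r else if i = j then q else t)"
  by (simp add: star_pattern_def)

lemma sum_star_pattern_col:
  assumes "j < n"
  shows "(\<Sum>k\<in>{1..<n}. star_pattern n p q r t $$ (k, j)) =
    (if j = 0 then of_nat (n - 1) * r else q + of_nat (n - 2) * t)"
proof (cases "j = 0")
  case True
  then show ?thesis
    by (simp add: star_pattern_index)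
next
  case False
  then have "(\<Sum>k\<in>{1..<n}. star_pattern n p q r t $$ (k, j)) = q + (\<Sum>k\<in>{1..<n} - {j}. t)"
    using assms by (simp add: star_pattern_index sum.remove[of _ j])
  with False assms show ?thesis
    by (simp add: card_Diff_singleton)
qed

lemma sum_star_pattern_row:
  assumes "i < n"
  shows "(\<Sum>k\<in>{1..<n}. star_pattern n p q r t $$ (i, k)) =
    (if i = 0 then of_nat (n - 1) * r else q + of_nat (n - 2) * t)"
proof -
  have "(\<Sum>k\<in>{1..<n}. star_pattern n p q r t $$ (i, k)) = (\<Sum>k\<in>{1..<n}. star_pattern n p q r t $$ (k, i))"
    using assms by (intro sum.cong) (auto simp: star_pattern_index)
  with sum_star_pattern_col[OF assms] show ?thesis by simp
qed

lemma star_pattern_inverse_of_pencil: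
  assumes "a * p + b * (of_nat (n - 1) * r) = 1" "a * r + b * (q + of_nat (n - 2) * t) = 0"
    and "a * r + b * p = 0" "a * q + b * r = 1" "a * t + b * r = 0"
  shows "pencil n a b * star_pattern n p q r t = 1\<^sub>m n"
    and "star_pattern n p q r t * pencil n a b = 1\<^sub>m n"
proof (rule_tac [!] eq_matI)
  fix i j assume "i < dim_row (1\<^sub>m n :: complex mat)" "j < dim_col (1\<^sub>m n :: complex mat)"
  then have ij: "i < n" "j < n" by auto
  let ?P = "star_pattern n p q r t"
  have "(pencil n a b * ?P) $$ (i, j) = a * ?P $$ (i, j) + b *
      (if i = 0 then if j = 0 then of_nat (n - 1) * r else q + of_nat (n - 2) * t else ?P $$ (0, j))"
    using ij sum_star_pattern_col[OF ij(2), of p q r t] by (simp add: pencil_mult_index del: of_nat_diff)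
  then show "(pencil n a b * ?P) $$ (i, j) = 1\<^sub>m n $$ (i, j)"
    using ij assms by (simp add: star_pattern_index del: of_nat_diff)
  have "(?P * pencil n a b) $$ (i, j) = a * ?P $$ (i, j) + b *
      (if j = 0 then if i = 0 then of_nat (n - 1) * r else q + of_nat (n - 2) * t else ?P $$ (i, 0))"
    using ij sum_star_pattern_row[OF ij(1), of p q r t] by (simp add: mult_pencil_index del: of_nat_diff)
  then show "(?P * pencil n a b) $$ (i, j) = 1\<^sub>m n $$ (i, j)"
    using ij assms by (simp add: star_pattern_index del: of_nat_diff)
qed (simp_all add: star_pattern_def)

lemma pencil_inverse_eq_star_pattern:
  assumes n: "n \<ge> 3" and N: "N \<in> carrier_mat n n"
    and left: "pencil n a b * N = 1\<^sub>m n" and right: "N * pencil n a b = 1\<^sub>m n"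
  obtains p q r t where "N = star_pattern n p q r t"
proof -
  have row: "a * N $$ (i, j) + b * N $$ (0, j) = (if i = j then 1 else 0)"
    if "1 \<le> i" "i < n" "j < n" for i j
    using arg_cong[OF left, of "\<lambda>M. M $$ (i, j)"] that by (simp add: pencil_mult_index[OF N])
  have col: "a * N $$ (i, j) + b * N $$ (i, 0) = (if i = j then 1 else 0)"
    if "1 \<le> j" "i < n" "j < n" for i j
    using arg_cong[OF right, of "\<lambda>M. M $$ (i, j)"] that by (simp add: mult_pencil_index[OF N])
  have a: "a \<noteq> 0"
    using row[of 1 1] row[of 2 1] n by auto
  define p where "p = N $$ (0, 0)"
  define r where "r = - b * p / a"
  define q where "q = (1 - b * r) / a"
  define t where "t = - b * r / a"
  have N_col0: "N $$ (i, 0) = r" if "1 \<le> i" "i < n" for i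
  proof -
    have "a * N $$ (i, 0) + b * p = 0"
      using row[of i 0] that by (simp add: p_def)
    with a show ?thesis by (simp add: r_def field_simps eq_neg_iff_add_eq_0)
  qed
  have N_row0: "N $$ (0, j) = r" if "1 \<le> j" "j < n" for j
  proof -
    have "a * N $$ (0, j) + b * p = 0"
      using col[of j 0] that by (simp add: p_def)
    with a show ?thesis by (simp add: r_def field_simps eq_neg_iff_add_eq_0)
  qed
  have N_inner: "N $$ (i, j) = (if i = j then q else t)"
    if "1 \<le> i" "i < n" "1 \<le> j" "j < n" for i j
  proof -
    have "a * N $$ (i, j) + b * r = (if i = j then 1 else 0)"
      using row[of i j] that by (simp add: N_row0)
    then have "N $$ (i, j) = ((if i = j then 1 else 0) - b * r) / a"
      using a by (simp add: eq_divide_eq eq_diff_eq mult.commute)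
    then show ?thesis by (simp add: q_def t_def)
  qed
  have "N = star_pattern n p q r t"
  proof (rule eq_matI)
    fix i j assume "i < dim_row (star_pattern n p q r t)" "j < dim_col (star_pattern n p q r t)"
    then have "i < n" "j < n" by (auto simp: star_pattern_def)
    then show "N $$ (i, j) = star_pattern n p q r t $$ (i, j)"
      by (cases "i = 0"; cases "j = 0") (simp_all add: star_pattern_index p_def N_col0 N_row0 N_inner)
  qed (use N in \<open>auto simp: star_pattern_def\<close>)
  then show thesis by (rule that)
qed

lemma star_pattern_pencil_inverse_relation:
  assumes n: "n \<ge> 3" and inv: "pencil n a b * star_pattern n p q r t = 1\<^sub>m n"
  shows "p - q = of_nat (n - 2) * t"
proof -
  let ?P = "star_pattern n p q r t"
  have entry: "(pencil n a b * ?P) $$ (i, j) = (if i = j then 1 else 0)" if "i < n" "j < n" for i j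
    using inv that by simp
  have "a * p + b * (of_nat (n - 1) * r) = 1"
    using entry[of 0 0] n sum_star_pattern_col[of 0 n p q r t]
    by (simp add: pencil_mult_index star_pattern_index del: of_nat_diff)
  moreover have "n - 1 = Suc (n - 2)"
    using n by arith
  ultimately have ap: "a * p = 1 - b * (of_nat (n - 2) + 1) * r"
    by (simp add: algebra_simps del: of_nat_diff)
  have aq: "a * q + b * r = 1" and at: "a * t + b * r = 0"
    using entry[of 1 1] entry[of 2 1] n by (simp_all add: pencil_mult_index star_pattern_index)
  then have "a \<noteq> 0"
    by auto
  from aq at have aq': "a * q = 1 - b * r" and at': "a * t = - b * r"
    by (simp_all add: eq_diff_eq eq_neg_iff_add_eq_0)
  have "a * (p - q) = (1 - b * (of_nat (n - 2) + 1) * r) - (1 - b * r)"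
    by (simp add: right_diff_distrib ap aq')
  also have "\<dots> = of_nat (n - 2) * (a * t)"
    by (simp add: at' algebra_simps)
  finally have "a * (p - q) = a * (of_nat (n - 2) * t)"
    by (simp add: ac_simps)
  with \<open>a \<noteq> 0\<close> show ?thesis by simp
qed

definition star_inverses :: "nat \<Rightarrow> complex mat set" where
  "star_inverses n = {N \<in> carrier_mat n n.
     \<exists>M\<in>lin_space n (star_graph n). M * N = 1\<^sub>m n \<and> N * M = 1\<^sub>m n}"

lemma star_inverse_is_star_pattern:
  assumes "n \<ge> 3" "N \<in> star_inverses n"
  obtains p q r t where "N = star_pattern n p q r t" "p - q = of_nat (n - 2) * t"
proof -
  from assms(2) obtain a b where
    inv: "N \<in> carrier_mat n n" "pencil n a b * N = 1\<^sub>m n" "N * pencil n a b = 1\<^sub>m n"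
    by (auto simp: star_inverses_def lin_space_star)
  then obtain p q r t where "N = star_pattern n p q r t"
    by (rule pencil_inverse_eq_star_pattern[OF assms(1)])
  with inv(2) show thesis
    using that star_pattern_pencil_inverse_relation[OF assms(1)] by blast
qed

lemma star_pattern_in_star_inverses:
  assumes "a * p + b * (of_nat (n - 1) * r) = 1" "a * r + b * (q + of_nat (n - 2) * t) = 0"
    and "a * r + b * p = 0" "a * q + b * r = 1" "a * t + b * r = 0"
  shows "star_pattern n p q r t \<in> star_inverses n"
  using star_pattern_inverse_of_pencil[OF assms] by (auto simp: star_inverses_def lin_space_star)

lemma coords_star_pattern:
  assumes "(i, j) \<in> sym_idx n"
  shows "coords (star_pattern n p q r t) (i, j) =
    (if i = 1 \<and> j = 1 then p else if i = 1 then r else if i = j then q else t)"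
  using assms by (auto simp: coords_def sym_idx_def star_pattern_index)

section \<open>Linear relations among the entries of the inverses\<close>

lemma vanishes_on_zariski_closure_iff:
  assumes "f \<in> polys_in n"
  shows "(\<forall>y\<in>zariski_closure n S. peval f y = 0) \<longleftrightarrow> (\<forall>x\<in>S. peval f x = 0)"
  using assms by (auto simp: zariski_closure_def)

definition star_relations :: "nat \<Rightarrow> cpoly set" where
  "star_relations n = {f. Poly_Mapping.keys f \<subseteq> linear_monoms n \<and>
     (\<forall>N\<in>star_inverses n. peval f (coords N) = 0)}"

lemma linear_forms_in_vanishing_ideal_star:
  "{f \<in> vanishing_ideal n (reciprocal_variety n (star_graph n)). is_linear_form f} = star_relations n"
proof -
  have "f \<in> vanishing_ideal n (reciprocal_variety n (star_graph n)) \<longleftrightarrow>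
      f \<in> polys_in n \<and> (\<forall>N\<in>star_inverses n. peval f (coords N) = 0)" for f
    using vanishes_on_zariski_closure_iff[of f n]
    unfolding vanishing_ideal_def reciprocal_variety_def star_inverses_def by (auto; blast)
  then show ?thesis
    using linear_form_iff_keys unfolding star_relations_def by blast
qed

lemma star_relations_add:
  "f \<in> star_relations n \<Longrightarrow> g \<in> star_relations n \<Longrightarrow> f + g \<in> star_relations n"
  using keys_add[of f g] by (auto simp: star_relations_def peval_add)

lemma star_relations_cscale: "f \<in> star_relations n \<Longrightarrow> cscale a f \<in> star_relations n"
  using keys_cscale_subset[of a f] by (auto simp: star_relations_def peval_cscale)

definition star_gens :: "nat \<Rightarrow> cpoly set" where
  "star_gens n = {var 2 2 - var i i | i. 3 \<le> i \<and> i \<le> n}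
     \<union> {var 1 2 - var i j | i j. i < j \<and> star_graph n i j}
     \<union> {var 2 3 - var i j | i j. 2 \<le> i \<and> i < j \<and> j \<le> n}
     \<union> {var 1 1 - cscale (of_nat (n - 2)) (var (n - 1) n) - var n n}"

lemma star_edge_gens_eq:
  "{var 1 2 - var i j | i j. i < j \<and> star_graph n i j} = {var 1 2 - var 1 j | j. 2 \<le> j \<and> j \<le> n}"
  by (auto simp: star_graph_def; fastforce)

lemma star_gens_subset_star_relations:
  assumes n: "n \<ge> 3"
  shows "star_gens n \<subseteq> star_relations n"
proof
  fix g assume "g \<in> star_gens n"
  then consider i where "3 \<le> i" "i \<le> n" "g = var 2 2 - var i i"
    | j where "2 \<le> j" "j \<le> n" "g = var 1 2 - var 1 j"
    | i j where "2 \<le> i" "i < j" "j \<le> n" "g = var 2 3 - var i j"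
    | "g = var 1 1 - cscale (of_nat (n - 2)) (var (n - 1) n) - var n n"
    using that unfolding star_gens_def star_edge_gens_eq by auto
  note gen_cases = this
  have keys: "Poly_Mapping.keys g \<subseteq> linear_monoms n"
    using gen_cases n
    by cases (simp add: var_eq_pvar;
        intro keys_diff_subset keys_cscale_subsetI keys_pvar_subset sym_idxI; arith)+
  have n1: "n - 1 \<noteq> n" "n - 1 \<noteq> 1"
    using n by auto
  have vanish: "peval g (coords (star_pattern n p q r t)) = 0"
    if "p - q = of_nat (n - 2) * t" for p q r t
    using gen_cases that[unfolded diff_eq_eq] n n1
    by cases (simp_all add: var_eq_pvar peval_diff peval_cscale coords_star_pattern sym_idxI
        del: of_nat_diff)
  show "g \<in> star_relations n"
    unfolding star_relations_def
  proof (intro CollectI conjI keys ballI)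
    fix N assume "N \<in> star_inverses n"
    with n obtain p q r t where "N = star_pattern n p q r t" "p - q = of_nat (n - 2) * t"
      by (rule star_inverse_is_star_pattern)
    with vanish show "peval g (coords N) = 0" by simp
  qed
qed

lemma cspan_star_gens_subset_star_relations:
  assumes "n \<ge> 3"
  shows "cspan (star_gens n) \<subseteq> star_relations n"
proof
  fix f assume "f \<in> cspan (star_gens n)"
  then show "f \<in> star_relations n"
  proof (induction rule: cspan_induct)
    case zero
    show ?case by (simp add: star_relations_def)
  next
    case (add f h)
    then show ?case by (rule star_relations_add)
  next
    case (cscale a f)
    then show ?case by (rule star_relations_cscale)
  next
    case (base g)
    then show ?case using star_gens_subset_star_relations[OF assms] by blast
  qed
qed

definition orbit_rep :: "nat \<times> nat \<Rightarrow> nat \<times> nat" where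
  "orbit_rep = (\<lambda>(i, j). if i = 1 \<and> j = 1 then (1, 1) else if i = j then (2, 2)
     else if i = 1 then (1, 2) else (2, 3))"

definition orbit_form :: "(nat \<times> nat \<Rightarrow> complex) \<Rightarrow> cpoly" where
  "orbit_form w = cscale (w (1, 1)) (pvar (1, 1)) + cscale (w (2, 2)) (pvar (2, 2))
     + cscale (w (1, 2)) (pvar (1, 2)) + cscale (w (2, 3)) (pvar (2, 3))"

lemma orbit_form_add: "orbit_form w + orbit_form w' = orbit_form (\<lambda>u. w u + w' u)"
  by (simp add: orbit_form_def cscale_add_left algebra_simps)

lemma orbit_form_zero: "orbit_form (\<lambda>_. 0) = 0"
  by (simp add: orbit_form_def)

lemma cscale_pvar_orbit_rep:
  "cscale a (pvar (orbit_rep v)) = orbit_form (\<lambda>u. if u = orbit_rep v then a else 0)"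
  by (cases v) (auto simp: orbit_rep_def orbit_form_def)

lemma pvar_minus_orbit_rep_in_cspan:
  assumes n: "n \<ge> 3" and v: "v \<in> sym_idx n"
  shows "pvar v - pvar (orbit_rep v) \<in> cspan (star_gens n)"
proof -
  obtain i j where ij: "v = (i, j)" "1 \<le> i" "i \<le> j" "j \<le> n"
    using v by (cases v) (auto simp: sym_idx_def)
  have swap: "a - b \<in> star_gens n \<Longrightarrow> b - a \<in> cspan (star_gens n)" for a b
    using cspan_diff[OF cspan_zero cspan_base, of "a - b"] by simp
  consider "i = 1" "j = 1" | "i = j" "i = 2" | "i = j" "3 \<le> i" | "i = 1" "2 \<le> j" | "2 \<le> i" "i < j"
    using ij by linarith
  then show ?thesis
  proof cases
    case 3
    then have "var 2 2 - var i i \<in> star_gens n"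
      using ij unfolding star_gens_def by blast
    with 3 ij show ?thesis
      by (simp add: orbit_rep_def var_eq_pvar swap)
  next
    case 4
    then have "var 1 2 - var 1 j \<in> star_gens n"
      using ij unfolding star_gens_def star_edge_gens_eq by blast
    with 4 ij show ?thesis
      by (simp add: orbit_rep_def var_eq_pvar numeral_2_eq_2 swap)
  next
    case 5
    then have "var 2 3 - var i j \<in> {var 2 3 - var i j | i j. 2 \<le> i \<and> i < j \<and> j \<le> n}"
      using ij by blast
    then have "var 2 3 - var i j \<in> star_gens n"
      unfolding star_gens_def by blast
    with 5 ij show ?thesis
      by (simp add: orbit_rep_def var_eq_pvar swap)
  qed (use ij in \<open>simp_all add: orbit_rep_def cspan_zero\<close>)
qed

lemma linear_form_reduces_to_orbit_form:
  assumes n: "n \<ge> 3" and f: "Poly_Mapping.keys f \<subseteq> linear_monoms n"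
  obtains w where "f - orbit_form w \<in> cspan (star_gens n)"
proof -
  define c where "c v = Poly_Mapping.lookup f (Poly_Mapping.single v 1)" for v
  have "\<exists>w. (\<Sum>v\<in>F. cscale (c v) (pvar v)) - orbit_form w \<in> cspan (star_gens n)"
    if "finite F" "F \<subseteq> sym_idx n" for F
    using that
  proof (induction F rule: finite_induct)
    case empty
    show ?case
      using orbit_form_zero cspan_zero by (intro exI[of _ "\<lambda>_. 0"]) simp
  next
    case (insert v F)
    then obtain w where w: "(\<Sum>v\<in>F. cscale (c v) (pvar v)) - orbit_form w \<in> cspan (star_gens n)"
      by auto
    define w' where "w' = (\<lambda>u. w u + (if u = orbit_rep v then c v else 0))"
    have "orbit_form w' = orbit_form w + cscale (c v) (pvar (orbit_rep v))"
      by (simp add: w'_def cscale_pvar_orbit_rep orbit_form_add)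
    then have "(\<Sum>v\<in>insert v F. cscale (c v) (pvar v)) - orbit_form w' =
        cscale (c v) (pvar v - pvar (orbit_rep v)) + ((\<Sum>v\<in>F. cscale (c v) (pvar v)) - orbit_form w)"
      using insert(1,2) by (simp add: cscale_diff algebra_simps)
    also have "\<dots> \<in> cspan (star_gens n)"
      using insert(4) pvar_minus_orbit_rep_in_cspan[OF n] w by (intro cspan_add cspan_cscale) auto
    finally show ?case by blast
  qed
  then obtain w where "(\<Sum>v\<in>sym_idx n. cscale (c v) (pvar v)) - orbit_form w \<in> cspan (star_gens n)"
    using finite_sym_idx by blast
  moreover have "f = (\<Sum>v\<in>sym_idx n. cscale (c v) (pvar v))"
    unfolding c_def by (rule linear_form_expansion[OF f])
  ultimately show thesis
    using that by simp
qed

lemma peval_orbit_form_star_pattern: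
  assumes "n \<ge> 3"
  shows "peval (orbit_form w) (coords (star_pattern n p q r t)) =
    w (1, 1) * p + w (2, 2) * q + w (1, 2) * r + w (2, 3) * t"
  using assms by (simp add: orbit_form_def peval_add peval_cscale coords_star_pattern sym_idxI)

text \<open>The inverses of \<open>I\<close>, \<open>I + A\<close> and \<open>I - A\<close>; their parameters \<open>(p, q, r, t)\<close> span the
  hyperplane \<open>p - q = (n - 2) t\<close>.\<close>

lemma star_pattern_test_inverses:
  assumes n: "n \<ge> 3"
  defines "k \<equiv> 1 / of_nat (n - 2) :: complex"
  shows "star_pattern n 1 1 0 0 \<in> star_inverses n"
    and "star_pattern n (- k) (1 - k) k (- k) \<in> star_inverses n"
    and "star_pattern n (- k) (1 - k) (- k) (- k) \<in> star_inverses n"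
proof -
  define m :: complex where "m = of_nat (n - 2)"
  have "m \<noteq> 0"
    using n by (simp add: m_def del: of_nat_diff)
  then have mk: "m * k = 1" "k * m = 1"
    unfolding k_def m_def[symmetric] by simp_all
  have n1: "of_nat (n - 1) = m + 1"
    using n by (simp add: m_def of_nat_diff)
  show "star_pattern n 1 1 0 0 \<in> star_inverses n"
    by (rule star_pattern_in_star_inverses[where a = 1 and b = 0]) simp_all
  show "star_pattern n (- k) (1 - k) k (- k) \<in> star_inverses n"
    by (rule star_pattern_in_star_inverses[where a = 1 and b = 1])
      (simp_all add: n1[simplified] mk m_def[symmetric] algebra_simps)
  show "star_pattern n (- k) (1 - k) (- k) (- k) \<in> star_inverses n"
    by (rule star_pattern_in_star_inverses[where a = 1 and b = "-1"])
      (simp_all add: n1[simplified] mk m_def[symmetric] algebra_simps)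
qed

lemma orbit_form_relation_coeffs:
  assumes n: "n \<ge> 3" and rel: "orbit_form w \<in> star_relations n"
  defines "m \<equiv> of_nat (n - 2) :: complex"
  shows "w (2, 2) = - w (1, 1)" "w (1, 2) = 0" "w (2, 3) = - m * w (1, 1)"
proof -
  define k where "k = 1 / m"
  have "m * k = 1"
    using n by (simp add: k_def m_def del: of_nat_diff)
  have eval: "w (1, 1) * p + w (2, 2) * q + w (1, 2) * r + w (2, 3) * t = 0"
    if "star_pattern n p q r t \<in> star_inverses n" for p q r t
  proof -
    have "peval (orbit_form w) (coords (star_pattern n p q r t)) = 0"
      using rel that unfolding star_relations_def by blast
    then show ?thesis
      by (simp add: peval_orbit_form_star_pattern[OF n])
  qed
  note tests = star_pattern_test_inverses[OF n, folded m_def k_def]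
  from eval[OF tests(1)] show w22: "w (2, 2) = - w (1, 1)"
    by (simp add: eq_neg_iff_add_eq_0 add.commute)
  note plus = eval[OF tests(2)] and minus = eval[OF tests(3)]
  have "2 * k * w (1, 2) =
      (w (1, 1) * - k + w (2, 2) * (1 - k) + w (1, 2) * k + w (2, 3) * - k)
      - (w (1, 1) * - k + w (2, 2) * (1 - k) + w (1, 2) * - k + w (2, 3) * - k)"
    by (simp add: algebra_simps)
  also have "\<dots> = 0"
    using plus minus by simp
  finally have "2 * k * w (1, 2) = 0" .
  with \<open>m * k = 1\<close> show w12: "w (1, 2) = 0"
    by auto
  have "w (1, 1) + k * w (2, 3) = 0"
    using plus w22 w12 by (simp add: algebra_simps)
  then have "m * (w (1, 1) + k * w (2, 3)) = 0"
    by simp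
  then have "m * w (1, 1) + w (2, 3) = 0"
    by (simp add: distrib_left mult.assoc[symmetric] \<open>m * k = 1\<close>)
  then show "w (2, 3) = - m * w (1, 1)"
    by (simp add: eq_neg_iff_add_eq_0 add.commute)
qed

lemma orbit_form_relation_in_cspan:
  assumes n: "n \<ge> 3" and rel: "orbit_form w \<in> star_relations n"
  shows "orbit_form w \<in> cspan (star_gens n)"
proof -
  define m :: complex where "m = of_nat (n - 2)"
  have "var 1 1 - cscale m (var (n - 1) n) - var n n \<in> star_gens n"
    unfolding star_gens_def m_def by blast
  moreover have "var 2 2 - var n n \<in> star_gens n"
    using n unfolding star_gens_def by blast
  moreover have "var 2 3 - var (n - 1) n \<in> {var 2 3 - var i j | i j. 2 \<le> i \<and> i < j \<and> j \<le> n}"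
    using n by force
  then have "var 2 3 - var (n - 1) n \<in> star_gens n"
    unfolding star_gens_def by blast
  ultimately have "(var 1 1 - cscale m (var (n - 1) n) - var n n) - (var 2 2 - var n n)
      - cscale m (var 2 3 - var (n - 1) n) \<in> cspan (star_gens n)"
    by (blast intro: cspan_diff cspan_cscale cspan_base)
  moreover have "(var 1 1 - cscale m (var (n - 1) n) - var n n) - (var 2 2 - var n n)
      - cscale m (var 2 3 - var (n - 1) n) = pvar (1, 1) - pvar (2, 2) - cscale m (pvar (2, 3))"
    by (simp add: var_eq_pvar cscale_diff)
  moreover have "orbit_form w = cscale (w (1, 1)) (pvar (1, 1) - pvar (2, 2) - cscale m (pvar (2, 3)))"
    using orbit_form_relation_coeffs[OF n rel]
    by (intro poly_mapping_eqI) (simp add: orbit_form_def lookup_add lookup_minus m_def algebra_simps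
        del: of_nat_diff)
  ultimately show ?thesis
    by (simp add: cspan_cscale)
qed

lemma star_relations_eq_cspan:
  assumes n: "n \<ge> 3"
  shows "star_relations n = cspan (star_gens n)"
proof
  show "star_relations n \<subseteq> cspan (star_gens n)"
  proof
    fix f assume f: "f \<in> star_relations n"
    then have "Poly_Mapping.keys f \<subseteq> linear_monoms n"
      by (simp add: star_relations_def)
    then obtain w where w: "f - orbit_form w \<in> cspan (star_gens n)"
      by (rule linear_form_reduces_to_orbit_form[OF n])
    then have "f - orbit_form w \<in> star_relations n"
      using cspan_star_gens_subset_star_relations[OF n] by blast
    then have "f + cscale (-1) (f - orbit_form w) \<in> star_relations n"
      using f by (intro star_relations_add star_relations_cscale)
    then have "orbit_form w \<in> cspan (star_gens n)"
      by (intro orbit_form_relation_in_cspan[OF n]) (simp add: cscale_minus_one)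
    with w have "(f - orbit_form w) + orbit_form w \<in> cspan (star_gens n)"
      by (rule cspan_add)
    then show "f \<in> cspan (star_gens n)"
      by simp
  qed
qed (rule cspan_star_gens_subset_star_relations[OF n])

section \<open>Spectrum of the star\<close>

lemma row_star_adj_scalar_prod:
  assumes "v \<in> carrier_vec n" "i < n"
  shows "row (star_adj n) i \<bullet> v = (if i = 0 then (\<Sum>k\<in>{1..<n}. v $ k) else v $ 0)"
  using assms sum_star_adj_row[OF assms(2), of "\<lambda>k. v $ k"]
  by (simp add: scalar_prod_def atLeast0LessThan)

lemma eigenvalueI:
  assumes "A \<in> carrier_mat n n" "v \<in> carrier_vec n" "v $ j \<noteq> 0" "j < n" "A *\<^sub>v v = k \<cdot>\<^sub>v v"
  shows "eigenvalue A k"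
proof -
  have "v \<noteq> 0\<^sub>v n"
    using assms(3,4) by auto
  with assms show ?thesis
    unfolding eigenvalue_def eigenvector_def by auto
qed

lemma eigenvalue_star_adj_sqrt:
  assumes n: "n \<ge> 2" and s: "s * s = of_nat (n - 1)"
  shows "eigenvalue (star_adj n) s"
proof (rule eigenvalueI)
  let ?v = "vec n (\<lambda>i. if i = 0 then s else 1) :: complex vec"
  show "star_adj n \<in> carrier_mat n n" "?v \<in> carrier_vec n" "?v $ 1 \<noteq> 0" "1 < n"
    using n by auto
  have "(\<Sum>k\<in>{1..<n}. ?v $ k) = of_nat (n - 1)"
    by simp
  then show "star_adj n *\<^sub>v ?v = s \<cdot>\<^sub>v ?v"
    using s by (intro eq_vecI) (auto simp: row_star_adj_scalar_prod)
qed

lemma eigenvalue_star_adj_zero: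
  assumes n: "n \<ge> 3"
  shows "eigenvalue (star_adj n) 0"
proof (rule eigenvalueI)
  let ?v = "vec n (\<lambda>i. if i = 1 then 1 else if i = 2 then -1 else 0) :: complex vec"
  show "star_adj n \<in> carrier_mat n n" "?v \<in> carrier_vec n" "?v $ 1 \<noteq> 0" "1 < n"
    using n by auto
  have "(\<Sum>k\<in>{1..<n}. ?v $ k) = (\<Sum>k\<in>{1..<n}. (if k = 1 then 1 else 0) + (if k = 2 then -1 else 0))"
    by (intro sum.cong) auto
  also have "\<dots> = 0"
    using n by (simp add: sum.distrib)
  finally show "star_adj n *\<^sub>v ?v = 0 \<cdot>\<^sub>v ?v"
    by (intro eq_vecI) (auto simp: row_star_adj_scalar_prod)
qed

lemma eigenvalue_star_adj_cases:
  assumes n: "n \<ge> 2" and e: "eigenvalue (star_adj n) k"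
  shows "k = 0 \<or> k * k = of_nat (n - 1)"
proof (rule ccontr)
  assume h: "\<not> (k = 0 \<or> k * k = of_nat (n - 1))"
  from e obtain v where v: "v \<in> carrier_vec n" "v \<noteq> 0\<^sub>v n" "star_adj n *\<^sub>v v = k \<cdot>\<^sub>v v"
    unfolding eigenvalue_def eigenvector_def by auto
  have leaf: "v $ 0 = k * v $ i" if "1 \<le> i" "i < n" for i
    using arg_cong[OF v(3), of "\<lambda>x. x $ i"] that v(1) by (simp add: row_star_adj_scalar_prod)
  have centre: "(\<Sum>i\<in>{1..<n}. v $ i) = k * v $ 0"
    using arg_cong[OF v(3), of "\<lambda>x. x $ 0"] n v(1) by (simp add: row_star_adj_scalar_prod)
  have "k * (k * v $ 0) = (\<Sum>i\<in>{1..<n}. k * v $ i)"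
    by (simp add: centre[symmetric] sum_distrib_left)
  also have "\<dots> = (\<Sum>i\<in>{1..<n}. v $ 0)"
    using leaf by (intro sum.cong) auto
  also have "\<dots> = of_nat (n - 1) * v $ 0"
    by simp
  finally have "(k * k - of_nat (n - 1)) * v $ 0 = 0"
    by (simp add: algebra_simps)
  then have v0: "v $ 0 = 0"
    using h by simp
  have "v $ i = 0" if "i < n" for i
    using v0 leaf[of i] h that by (cases "i = 0") auto
  then have "v = 0\<^sub>v n"
    using v(1) by (intro eq_vecI) auto
  with v(2) show False ..
qed

lemma num_eigenvalues_star:
  assumes n: "n \<ge> 3"
  shows "num_eigenvalues n (star_graph n) = 3"
proof -
  define s :: complex where "s = of_real (sqrt (real (n - 1)))"
  have ss: "s * s = of_nat (n - 1)"
    by (simp add: s_def flip: of_real_mult)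
  have "s \<noteq> 0"
    using n by (simp add: s_def)
  have "k * k = s * s \<longleftrightarrow> k = s \<or> k = - s" for k
    by (metis power2_eq_square power2_eq_iff)
  then have "{k. eigenvalue (star_adj n) k} = {0, s, - s}"
    using eigenvalue_star_adj_cases[of n] eigenvalue_star_adj_zero[OF n]
      eigenvalue_star_adj_sqrt[of n s] eigenvalue_star_adj_sqrt[of n "- s"] n ss
    by auto
  with \<open>s \<noteq> 0\<close> show ?thesis
    by (simp add: num_eigenvalues_def)
qed

section \<open>Orbits of the automorphism group on pairs\<close>

lemma graph_aut_comp:
  assumes "\<sigma> \<in> graph_aut n E" "\<tau> \<in> graph_aut n E"
  shows "\<sigma> \<circ> \<tau> \<in> graph_aut n E"
proof -
  have "bij_betw (\<sigma> \<circ> \<tau>) {1..n} {1..n}"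
    using assms by (auto simp: graph_aut_def intro: bij_betw_trans)
  moreover have "\<tau> i \<in> {1..n}" if "i \<in> {1..n}" for i
    using assms(2) that by (auto simp: graph_aut_def bij_betw_def)
  ultimately show ?thesis
    using assms by (simp add: graph_aut_def)
qed

lemma star_graph_aut_iff:
  assumes n: "n \<ge> 3"
  shows "\<sigma> \<in> graph_aut n (star_graph n) \<longleftrightarrow> bij_betw \<sigma> {1..n} {1..n} \<and> \<sigma> 1 = 1"
proof
  assume "\<sigma> \<in> graph_aut n (star_graph n)"
  then have bij: "bij_betw \<sigma> {1..n} {1..n}"
    and edge: "\<And>j. j \<in> {2..n} \<Longrightarrow> star_graph n (\<sigma> 1) (\<sigma> j)"
    using n by (auto simp: graph_aut_def star_graph_def)
  have "\<sigma> 1 = 1"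
  proof (rule ccontr)
    assume "\<sigma> 1 \<noteq> 1"
    with edge[of 2] edge[of 3] n have "\<sigma> 2 = \<sigma> 3"
      by (auto simp: star_graph_def)
    with bij n show False
      by (auto simp: bij_betw_def dest: inj_onD)
  qed
  with bij show "bij_betw \<sigma> {1..n} {1..n} \<and> \<sigma> 1 = 1" ..
next
  assume "bij_betw \<sigma> {1..n} {1..n} \<and> \<sigma> 1 = 1"
  then have bij: "bij_betw \<sigma> {1..n} {1..n}" and fix1: "\<sigma> 1 = 1" by auto
  have inj: "inj_on \<sigma> {1..n}" and one: "1 \<in> {1..n}"
    using bij n by (auto simp: bij_betw_def)
  have "star_graph n (\<sigma> i) (\<sigma> j) \<longleftrightarrow> star_graph n i j" if "i \<in> {1..n}" "j \<in> {1..n}" for i j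
  proof -
    have "\<sigma> i \<in> {1..n}" "\<sigma> j \<in> {1..n}"
      using bij that by (auto simp: bij_betw_def)
    moreover have "\<sigma> i = \<sigma> j \<longleftrightarrow> i = j" "\<sigma> i = 1 \<longleftrightarrow> i = 1" "\<sigma> j = 1 \<longleftrightarrow> j = 1"
      using inj_onD[OF inj, of i j] inj_onD[OF inj, of i 1] inj_onD[OF inj, of j 1] that one fix1
      by auto
    ultimately show ?thesis
      using that by (simp add: star_graph_def)
  qed
  with bij show "\<sigma> \<in> graph_aut n (star_graph n)"
    by (simp add: graph_aut_def)
qed

lemma star_graph_aut_transpose:
  assumes "n \<ge> 3" "a \<in> {1..n}" "b \<in> {1..n}" "a = 1 \<longleftrightarrow> b = 1"
  shows "Transposition.transpose a b \<in> graph_aut n (star_graph n)"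
  using assms by (auto simp: star_graph_aut_iff transpose_def)

lemma upairsI: "i \<in> {1..n} \<Longrightarrow> j \<in> {1..n} \<Longrightarrow> {i, j} \<in> upairs n"
  by (auto simp: upairs_def)

definition pair_type :: "nat set \<Rightarrow> bool \<times> nat" where
  "pair_type P = (1 \<in> P, card P)"

lemma pair_type_aut_image:
  assumes "n \<ge> 3" "\<sigma> \<in> graph_aut n (star_graph n)" "P \<subseteq> {1..n}"
  shows "pair_type (\<sigma> ` P) = pair_type P"
proof -
  have bij: "bij_betw \<sigma> {1..n} {1..n}" and fix1: "\<sigma> 1 = 1"
    using assms(1,2) by (auto simp: star_graph_aut_iff)
  then have "inj_on \<sigma> P"
    using assms(3) by (auto simp: bij_betw_def intro: inj_on_subset)
  moreover have "1 \<in> \<sigma> ` P \<longleftrightarrow> 1 \<in> P"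
    using bij fix1 assms(1,3) by (force simp: bij_betw_def dest: inj_onD)
  ultimately show ?thesis
    by (simp add: pair_type_def card_image)
qed

lemma card_doubleton_eq_one_iff: "card {i, j} = 1 \<longleftrightarrow> i = j"
  by (cases "i = j") simp_all

lemma star_graph_aut_pair_exists:
  assumes n: "n \<ge> 3" and ij: "i \<in> {1..n}" "j \<in> {1..n}" and kl: "k \<in> {1..n}" "l \<in> {1..n}"
    and type: "pair_type {i, j} = pair_type {k, l}"
  shows "\<exists>\<sigma>\<in>graph_aut n (star_graph n). \<sigma> ` {i, j} = {k, l}"
proof -
  have centre: "1 \<in> {i, j} \<longleftrightarrow> 1 \<in> {k, l}" and same: "i = j \<longleftrightarrow> k = l"
    using type card_doubleton_eq_one_iff[of i j] card_doubleton_eq_one_iff[of k l]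
    by (auto simp: pair_type_def)
  show ?thesis
  proof (cases "1 \<in> {i, j}")
    case True
    have "\<exists>a\<in>{1..n}. {x, y} = {1, a}" if "1 \<in> {x, y}" "x \<in> {1..n}" "y \<in> {1..n}" for x y
      using that by (cases "x = 1") (auto simp: insert_commute)
    then obtain a b where a: "a \<in> {1..n}" "{i, j} = {1, a}" and b: "b \<in> {1..n}" "{k, l} = {1, b}"
      using True centre ij kl by meson
    have "a = 1 \<longleftrightarrow> b = 1"
      using same a(2) b(2) by (metis doubleton_eq_iff insert_absorb2)
    then have "Transposition.transpose a b \<in> graph_aut n (star_graph n)"
      using n a b by (intro star_graph_aut_transpose) auto
    moreover have "Transposition.transpose a b ` {1, a} = {1, b}"
      using \<open>a = 1 \<longleftrightarrow> b = 1\<close> by (auto simp: transpose_def)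
    ultimately show ?thesis
      using a b by metis
  next
    case False
    then have leaves: "i \<in> {2..n}" "j \<in> {2..n}" "k \<in> {2..n}" "l \<in> {2..n}"
      using centre ij kl by auto
    define \<tau>\<^sub>1 where "\<tau>\<^sub>1 = Transposition.transpose i k"
    define \<tau>\<^sub>2 where "\<tau>\<^sub>2 = Transposition.transpose (\<tau>\<^sub>1 j) l"
    have "\<tau>\<^sub>1 j \<in> {2..n}"
      using leaves by (auto simp: \<tau>\<^sub>1_def transpose_def)
    then have "\<tau>\<^sub>2 \<circ> \<tau>\<^sub>1 \<in> graph_aut n (star_graph n)"
      unfolding \<tau>\<^sub>1_def \<tau>\<^sub>2_def using n leaves
      by (intro graph_aut_comp star_graph_aut_transpose) auto
    moreover have "\<tau>\<^sub>2 k = k"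
      using same by (auto simp: \<tau>\<^sub>1_def \<tau>\<^sub>2_def transpose_def)
    then have "(\<tau>\<^sub>2 \<circ> \<tau>\<^sub>1) ` {i, j} = {k, l}"
      by (simp add: \<tau>\<^sub>1_def \<tau>\<^sub>2_def)
    ultimately show ?thesis
      by blast
  qed
qed

lemma star_pair_orbit_eq:
  assumes n: "n \<ge> 3" and P: "P \<in> upairs n"
  shows "{\<sigma> ` P | \<sigma>. \<sigma> \<in> graph_aut n (star_graph n)} = {Q \<in> upairs n. pair_type Q = pair_type P}"
proof -
  obtain i j where ij: "P = {i, j}" "i \<in> {1..n}" "j \<in> {1..n}"
    using P by (auto simp: upairs_def)
  have "Q \<in> upairs n \<and> pair_type Q = pair_type P" if "\<sigma> \<in> graph_aut n (star_graph n)" "Q = \<sigma> ` P"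
    for \<sigma> Q
  proof
    have "\<sigma> i \<in> {1..n}" "\<sigma> j \<in> {1..n}"
      using that(1) ij by (auto simp: graph_aut_def bij_betw_def)
    then show "Q \<in> upairs n"
      using that(2) ij by (simp add: upairsI)
    show "pair_type Q = pair_type P"
      using pair_type_aut_image[OF n that(1), of P] that(2) ij by auto
  qed
  moreover have "\<exists>\<sigma>\<in>graph_aut n (star_graph n). Q = \<sigma> ` P"
    if Q: "Q \<in> upairs n" "pair_type Q = pair_type P" for Q
  proof -
    obtain k l where "Q = {k, l}" "k \<in> {1..n}" "l \<in> {1..n}"
      using Q(1) by (auto simp: upairs_def)
    with Q(2) ij show ?thesis
      using star_graph_aut_pair_exists[OF n ij(2,3)] by metis
  qed
  ultimately show ?thesis
    by blast
qed

lemma num_pair_orbits_star: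
  assumes n: "n \<ge> 3"
  shows "num_pair_orbits n (star_graph n) = 4"
proof -
  define fiber where "fiber t = {Q \<in> upairs n. pair_type Q = t}" for t
  define types where "types = {(True, 1::nat), (False, 1), (True, 2), (False, 2)}"
  have orbits: "(\<lambda>P. {\<sigma> ` P | \<sigma>. \<sigma> \<in> graph_aut n (star_graph n)}) ` upairs n =
      fiber ` pair_type ` upairs n"
    using star_pair_orbit_eq[OF n] by (auto simp: fiber_def image_iff)
  have "pair_type ` upairs n = types"
  proof
    have "pair_type {i, j} \<in> types" for i j
      by (cases "i = j") (auto simp: types_def pair_type_def)
    then show "pair_type ` upairs n \<subseteq> types"
      by (auto simp: upairs_def)
    have "{1} \<in> upairs n" "{2} \<in> upairs n" "{1, 2} \<in> upairs n" "{2, 3} \<in> upairs n"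
      using n upairsI[of 1 n 1] upairsI[of 2 n 2] upairsI[of 1 n 2] upairsI[of 2 n 3] by simp_all
    then have "pair_type {1} \<in> pair_type ` upairs n" "pair_type {2} \<in> pair_type ` upairs n"
      "pair_type {1, 2} \<in> pair_type ` upairs n" "pair_type {2, 3} \<in> pair_type ` upairs n"
      by (auto intro: imageI)
    then show "types \<subseteq> pair_type ` upairs n"
      unfolding types_def by (simp add: pair_type_def numeral_2_eq_2)
  qed
  moreover have "inj_on fiber (pair_type ` upairs n)"
  proof (rule inj_onI)
    fix s t assume "s \<in> pair_type ` upairs n" "fiber s = fiber t"
    then obtain P where "P \<in> upairs n" "s = pair_type P" "P \<in> fiber t"
      by (auto simp: fiber_def)
    then show "s = t"
      by (simp add: fiber_def)
  qed
  ultimately show ?thesis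
    unfolding num_pair_orbits_def orbits by (simp add: card_image types_def)
qed

theorem mainTheorem7:
  fixes n :: nat
  assumes "n \<ge> 3"
  shows "num_eigenvalues n (star_graph n) = 3
    \<and> num_pair_orbits n (star_graph n) = 4
    \<and> {f \<in> vanishing_ideal n (reciprocal_variety n (star_graph n)). is_linear_form f}
      = cspan ({var 2 2 - var i i | i. 3 \<le> i \<and> i \<le> n}
             \<union> {var 1 2 - var i j | i j. i < j \<and> star_graph n i j}
             \<union> {var 2 3 - var i j | i j. 2 \<le> i \<and> i < j \<and> j \<le> n}
             \<union> {var 1 1 - cscale (of_nat (n - 2)) (var (n - 1) n) - var n n})"
  using num_eigenvalues_star[OF assms] num_pair_orbits_star[OF assms]
    linear_forms_in_vanishing_ideal_star star_relations_eq_cspan[OF assms]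
  unfolding star_gens_def by simp

end
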